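(* Let $d\ge0$, let $x\in V_d$ and $n:=\mathrm{min.deg}\,x$. Then: (1) There exists $\xi\in\mathfrak g_d^x$ with $\mathrm{min.deg}\,\xi=0$. (2) For any such $\xi$, $$\mathfrak g_d^x=\mathbb C[z]\xi+z^{d+1-n}\mathfrak g_d=\mathbb C\xi\oplus\mathbb C\xi z\oplus\cdots\oplus\mathbb C\xi z^{d-n}\oplus\mathfrak{sl}_2z^{d+1-n}\oplus\cdots\oplus\mathfrak{sl}_2z^d.$$ (3) For $s=2(d+1-n')$ with $n'=0,1,\dots,d+1$, $$(V_d)_{(s)}=\{x'\in V_d:\mathrm{min.deg}\,x'=n'\}=(T\setminus0)z^{n'}\oplus Tz^{n'+1}\oplus\cdots\oplus Tz^d,$$ and for all other values of $s$, $(V_d)_{(s)}=\emptyset$. In particular $\mathrm{mod}(\mathfrak g_d:V_d)=0$, and this value is attained by every nonempty $(V_d)_{(s)}$.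
   Context: $T=\mathbb C^2=\mathbb C\langle e_1,e_2\rangle$ with the standard symplectic form and the standard action of $\mathfrak{sl}_2=\mathfrak{sl}(T)$. $V_d=T\otimes\mathbb C[z]/(z^{d+1})$ and $\mathfrak g_d=\mathfrak{sl}_2\otimes\mathbb C[z]/(z^{d+1})$ (truncated current algebra), acting on $V_d$ by $(\xi z^a)(vz^b)=(\xi v)z^{a+b}$. For $x=x_0+x_1z+\cdots+x_dz^d$ in $V_d$ or $\mathfrak g_d$, $\mathrm{min.deg}\,x=\min\{m:x_m\ne0\}$, with $\mathrm{min.deg}\,0=d+1$. $\mathfrak g_d^x$ is the stabilizer of $x$ in $\mathfrak g_d$. $(V_d)_{(s)}$ is the set of $x\in V_d$ whose orbit under $\mathfrak g_d$ (equivalently under its adjoint group) has dimension $s$, i.e. $\dim\mathfrak g_d.x=s$. The modality is $\mathrm{mod}(\mathfrak g_d:V_d)=\max_{s\ge0}(\dim(V_d)_{(s)}-s)$. *)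

theory Defs
  imports "HOL-Analysis.Analysis" "HOL-Library.Function_Algebras"
begin

text \<open>Elements of V_d = T (x) C[z]/(z^(d+1)) are coefficient sequences
  x :: nat => complex^2 (x m = coefficient of z^m) vanishing above d.
  Elements of g_d = sl_2 (x) C[z]/(z^(d+1)) are sequences of traceless
  2x2 complex matrices vanishing above d.\<close>

type_synonym vel = "nat \<Rightarrow> complex^2"
type_synonym gel = "nat \<Rightarrow> complex^2^2"

definition Vd :: "nat \<Rightarrow> vel set" where
  "Vd d = {x. \<forall>m>d. x m = 0}"

definition sl2 :: "(complex^2^2) set" where
  "sl2 = {A. trace A = 0}"

definition gd :: "nat \<Rightarrow> gel set" where
  "gd d = {\<xi>. (\<forall>m. \<xi> m \<in> sl2) \<and> (\<forall>m>d. \<xi> m = 0)}"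

text \<open>min.deg, with min.deg 0 = d+1.\<close>
definition mindeg :: "nat \<Rightarrow> (nat \<Rightarrow> 'a::zero) \<Rightarrow> nat" where
  "mindeg d x = (if \<exists>m\<le>d. x m \<noteq> 0 then (LEAST m. m \<le> d \<and> x m \<noteq> 0) else Suc d)"

text \<open>Action (xi z^a)(v z^b) = (xi v) z^(a+b), truncated at z^(d+1).\<close>
definition act :: "nat \<Rightarrow> gel \<Rightarrow> vel \<Rightarrow> vel" where
  "act d \<xi> x = (\<lambda>m. if m \<le> d then (\<Sum>a\<le>m. \<xi> a *v x (m - a)) else 0)"

definition stab :: "nat \<Rightarrow> vel \<Rightarrow> gel set" where
  "stab d x = {\<xi> \<in> gd d. act d \<xi> x = (\<lambda>m. 0)}"

definition pmul :: "nat \<Rightarrow> (nat \<Rightarrow> complex) \<Rightarrow> gel \<Rightarrow> gel" where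
  "pmul d c \<xi> = (\<lambda>m. if m \<le> d then (\<Sum>i\<le>m. (\<chi> p q. c i * \<xi> (m - i) $ p $ q)) else 0)"

definition zmul :: "nat \<Rightarrow> nat \<Rightarrow> gel \<Rightarrow> gel" where
  "zmul d k \<xi> = (\<lambda>m. if k \<le> m \<and> m \<le> d then \<xi> (m - k) else 0)"

definition vscale :: "complex \<Rightarrow> vel \<Rightarrow> vel" where
  "vscale c x = (\<lambda>m. c *s x m)"

definition cdim :: "vel set \<Rightarrow> nat" where
  "cdim S = vector_space.dim vscale S"

definition orbit_sp :: "nat \<Rightarrow> vel \<Rightarrow> vel set" where
  "orbit_sp d x = (\<lambda>\<xi>. act d \<xi> x) ` gd d"

definition Vs :: "nat \<Rightarrow> nat \<Rightarrow> vel set" where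
  "Vs d s = {x \<in> Vd d. cdim (orbit_sp d x) = s}"

text \<open>Dimension of a (constructible) subset S of V_d: the largest k such that
  some complex-linear map V_d -> C^k (given by k linear functionals with
  coefficients a i m j) maps S onto a set with nonempty interior in C^k.
  For constructible sets this is the algebraic (Zariski) dimension.\<close>
definition lin_fun :: "nat \<Rightarrow> (nat \<Rightarrow> nat \<Rightarrow> 2 \<Rightarrow> complex) \<Rightarrow> nat \<Rightarrow> vel \<Rightarrow> complex" where
  "lin_fun d a i x = (\<Sum>m\<le>d. \<Sum>j\<in>UNIV. a i m j * x m $ j)"

definition setdim :: "nat \<Rightarrow> vel set \<Rightarrow> nat" where
  "setdim d S = Sup {k. \<exists>a c r. r > 0 \<and>
      (\<forall>w :: nat \<Rightarrow> complex. (\<forall>i<k. cmod (w i - c i) < r) \<longrightarrow>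
          (\<exists>x\<in>S. \<forall>i<k. lin_fun d a i x = w i))}"

definition modality :: "nat \<Rightarrow> int" where
  "modality d = Max ((\<lambda>s. int (setdim d (Vs d s)) - int s) ` {s. Vs d s \<noteq> {}})"

end

theory Submission
  imports Defs
begin

text \<open>Write \<open>x = z\<^sup>n y\<close> with \<open>n = min.deg x\<close> and \<open>y\<^sub>0 \<noteq> 0\<close>. The map \<open>A \<mapsto> A y\<^sub>0\<close> sends \<open>sl\<^sub>2\<close>
  onto \<open>T\<close> with a one-dimensional kernel, so the action \<open>\<xi> \<mapsto> \<xi>.x\<close> is triangular for the
  \<open>z\<close>-adic filtration. Solving degree by degree gives \<open>g\<^sub>d.x = z\<^sup>n V\<^sub>d\<close>, so the orbit dimension
  \<open>2(d + 1 - n)\<close> depends only on \<open>n\<close>; each \<open>(V\<^sub>d)\<^sub>s\<close> is therefore a set \<open>{min.deg = n'}\<close>,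
  an open dense part of \<open>z\<^bsup>n'\<^esup> V\<^sub>d\<close>, whose dimension is exactly \<open>s\<close>. For the stabiliser,
  the constant term of \<open>\<xi>\<close> must lie in the kernel line of \<open>y\<^sub>0\<close>; comparing \<open>\<eta> - c(z) \<xi>\<close>
  with that line degree by degree peels off \<open>c(z)\<close> up to \<open>z\<^bsup>d-n\<^esup>\<close>, and the remainder lies
  in \<open>z\<^bsup>d+1-n\<^esup> g\<^sub>d\<close>, which kills \<open>x\<close> for degree reasons.\<close>

lemma vec2_eq_iff: "(u::'a^2) = v \<longleftrightarrow> u$1 = v$1 \<and> u$2 = v$2"
  by (simp add: vec_eq_iff forall_2)

lemma mat2_mult_vec: "(A::'a::comm_semiring_1^2^2) *v v = vector [A$1$1 * v$1 + A$1$2 * v$2, A$2$1 * v$1 + A$2$2 * v$2]"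
  by (simp add: vec2_eq_iff matrix_vector_mult_def sum_2)

lemma trace2: "trace (A::'a::comm_semiring_1^2^2) = A$1$1 + A$2$2"
  by (simp add: trace_def sum_2)

lemma sl2_iff: "A \<in> sl2 \<longleftrightarrow> A$2$2 = - A$1$1"
  by (auto simp: sl2_def trace2 add_eq_0_iff)

text \<open>\<open>complex^2^2\<close> only carries real scaling \<open>scaleR\<close>, hence an explicit complex one.\<close>

definition mscale :: "complex \<Rightarrow> complex^2^2 \<Rightarrow> complex^2^2" where
  "mscale c M = (\<chi> p q. c * M$p$q)"

lemma sl2_0: "0 \<in> sl2"
  by (simp add: sl2_iff)

lemma sl2_add: "A \<in> sl2 \<Longrightarrow> B \<in> sl2 \<Longrightarrow> A + B \<in> sl2"
  by (simp add: sl2_iff)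

lemma sl2_diff: "A \<in> sl2 \<Longrightarrow> B \<in> sl2 \<Longrightarrow> A - B \<in> sl2"
  by (simp add: sl2_iff)

lemma sl2_mscale: "A \<in> sl2 \<Longrightarrow> mscale c A \<in> sl2"
  by (simp add: sl2_iff mscale_def)

lemma sl2_sum: "(\<And>i. i \<in> I \<Longrightarrow> f i \<in> sl2) \<Longrightarrow> sum f I \<in> sl2"
  by (induction I rule: infinite_finite_induct) (auto intro: sl2_add sl2_0)

definition sl2_annihilator :: "complex^2 \<Rightarrow> complex^2^2" where
  "sl2_annihilator v = vector [vector [v$1 * v$2, - v$1 * v$1], vector [v$2 * v$2, - v$1 * v$2]]"

lemma sl2_annihilator_apply: "sl2_annihilator v *v w = (v$2 * w$1 - v$1 * w$2) *s v"
  by (simp add: sl2_annihilator_def mat2_mult_vec vec2_eq_iff algebra_simps)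

lemma sl2_annihilator_sl2: "sl2_annihilator v \<in> sl2"
  by (simp add: sl2_iff sl2_annihilator_def)

lemma sl2_annihilator_nonzero: "v \<noteq> 0 \<Longrightarrow> sl2_annihilator v \<noteq> 0"
  by (auto simp: sl2_annihilator_def vec2_eq_iff)

lemma sl2_annihilator_unique:
  assumes "A \<in> sl2" "A *v v = 0" "v \<noteq> 0"
  shows "\<exists>\<mu>. A = mscale \<mu> (sl2_annihilator v)"
proof -
  have tr: "A$2$2 = - A$1$1" using assms(1) by (simp add: sl2_iff)
  have row1: "A$1$1 * v$1 + A$1$2 * v$2 = 0" and row2: "A$2$1 * v$1 + A$2$2 * v$2 = 0"
    using assms(2) by (auto simp: mat2_mult_vec vec2_eq_iff)
  show ?thesis
  proof (cases "v$1 = 0")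
    case True
    then have "v$2 \<noteq> 0" using assms(3) by (auto simp: vec2_eq_iff)
    then show ?thesis using True row1 row2 tr
      by (intro exI[of _ "A$2$1 / (v$2 * v$2)"]) (auto simp: mscale_def sl2_annihilator_def vec2_eq_iff)
  next
    case False
    have "A$1$1 = - A$1$2 * v$2 / v$1" "A$2$1 = A$1$1 * v$2 / v$1"
      using row1 row2 tr False by (auto simp: field_simps add_eq_0_iff)
    moreover have "v$1 * (v$2 * A$1$1) = - (v$2 * (v$2 * A$1$2))"
      using arg_cong[OF row1, of "(*) (v$2)"] by (simp add: algebra_simps eq_neg_iff_add_eq_0)
    ultimately show ?thesis using tr False
      by (intro exI[of _ "- A$1$2 / (v$1 * v$1)"]) (auto simp: mscale_def sl2_annihilator_def vec2_eq_iff field_simps)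
  qed
qed

lemma sl2_annihilator_proportional:
  assumes "A \<in> sl2" "B \<in> sl2" "A *v v = 0" "B *v v = 0" "v \<noteq> 0" "B \<noteq> 0"
  shows "\<exists>l. A = mscale l B"
proof -
  obtain a b where "A = mscale a (sl2_annihilator v)" "B = mscale b (sl2_annihilator v)"
    using sl2_annihilator_unique assms by metis
  moreover from this have "b \<noteq> 0" using assms(6) by (auto simp: mscale_def vec_eq_iff)
  ultimately show ?thesis by (intro exI[of _ "a / b"]) (auto simp: mscale_def vec_eq_iff)
qed

lemma sl2_apply_surj:
  assumes "v \<noteq> 0"
  shows "\<exists>A\<in>sl2. A *v v = w"
proof (cases "v$1 = 0")
  case True
  then have "v$2 \<noteq> 0" using assms by (auto simp: vec2_eq_iff)
  then show ?thesis using True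
    by (intro bexI[of _ "vector [vector [- w$2 / v$2, w$1 / v$2], vector [0, w$2 / v$2]]"])
      (auto simp: sl2_iff mat2_mult_vec vec2_eq_iff)
next
  case False
  then show ?thesis
    by (intro bexI[of _ "vector [vector [w$1 / v$1, 0], vector [(w$2 + w$1 * v$2 / v$1) / v$1, - w$1 / v$1]]"])
      (auto simp: sl2_iff mat2_mult_vec vec2_eq_iff field_simps)
qed

lemma mindeg_le_Suc: "mindeg d x \<le> Suc d"
proof (cases "\<exists>m\<le>d. x m \<noteq> 0")
  case True
  then obtain m where "m \<le> d" "x m \<noteq> 0" by auto
  then have "(LEAST m. m \<le> d \<and> x m \<noteq> 0) \<le> m" by (intro Least_le) auto
  then show ?thesis using True \<open>m \<le> d\<close> by (simp add: mindeg_def)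
qed (auto simp: mindeg_def)

lemma less_mindeg_imp_zero: "m < mindeg d x \<Longrightarrow> x m = 0"
proof (cases "\<exists>m\<le>d. x m \<noteq> 0")
  case True
  assume m: "m < mindeg d x"
  then have "\<not> (m \<le> d \<and> x m \<noteq> 0)"
    using True by (intro not_less_Least) (simp add: mindeg_def)
  then show ?thesis using m mindeg_le_Suc[of d x] by simp
next
  case False
  assume "m < mindeg d x"
  then show ?thesis using False mindeg_le_Suc[of d x] by auto
qed

lemma mindeg_nonzero: "mindeg d x \<le> d \<Longrightarrow> x (mindeg d x) \<noteq> 0"
proof (cases "\<exists>m\<le>d. x m \<noteq> 0")
  case True
  then show ?thesis using LeastI_ex[OF True] by (simp add: mindeg_def)
qed (auto simp: mindeg_def)

lemma mindeg_eqI: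
  assumes "n \<le> Suc d" "\<forall>m<n. x m = 0" "n \<le> d \<longrightarrow> x n \<noteq> 0"
  shows "mindeg d x = n"
proof (rule ccontr)
  assume "mindeg d x \<noteq> n"
  then consider "mindeg d x < n" | "n < mindeg d x" by linarith
  then show False
  proof cases
    case 1
    then show False using assms mindeg_nonzero[of d x] by simp
  next
    case 2
    then show False using assms less_mindeg_imp_zero[of n d x] mindeg_le_Suc[of d x] by simp
  qed
qed

lemma mindeg_eq_0_iff: "mindeg d x = 0 \<longleftrightarrow> x 0 \<noteq> 0"
  using mindeg_nonzero[of d x] mindeg_eqI[of 0 d x] by auto

lemma gd_add: "\<xi> \<in> gd d \<Longrightarrow> \<eta> \<in> gd d \<Longrightarrow> \<xi> + \<eta> \<in> gd d"
  by (simp add: gd_def sl2_add)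

lemma gd_diff: "\<xi> \<in> gd d \<Longrightarrow> \<eta> \<in> gd d \<Longrightarrow> \<xi> - \<eta> \<in> gd d"
  by (simp add: gd_def sl2_diff)

definition gmonom :: "nat \<Rightarrow> complex^2^2 \<Rightarrow> gel" where
  "gmonom j A = (\<lambda>a. if a = j then A else 0)"

lemma gmonom_gd: "A \<in> sl2 \<Longrightarrow> j \<le> d \<Longrightarrow> gmonom j A \<in> gd d"
  by (simp add: gd_def gmonom_def sl2_0)

lemma act_add: "act d (\<xi> + \<eta>) x = act d \<xi> x + act d \<eta> x"
  by (simp add: act_def fun_eq_iff matrix_vector_mult_add_rdistrib sum.distrib)

lemma act_diff: "act d (\<xi> - \<eta>) x = act d \<xi> x - act d \<eta> x"
  by (simp add: act_def fun_eq_iff matrix_vector_mult_diff_rdistrib sum_subtractf)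

lemma act_gmonom:
  "act d (gmonom j A) x = (\<lambda>m. if j \<le> m \<and> m \<le> d then A *v x (m - j) else 0)"
proof -
  have "(if a = j then A else 0) *v y = (if a = j then A *v y else 0)" for a y
    by simp
  then show ?thesis by (simp add: act_def gmonom_def fun_eq_iff)
qed

definition Vd_from :: "nat \<Rightarrow> nat \<Rightarrow> vel set" where
  "Vd_from d n = {v. \<forall>m. (m < n \<or> d < m) \<longrightarrow> v m = 0}"

lemma act_in_Vd_from:
  assumes "\<forall>a<j. \<xi> a = 0"
  shows "act d \<xi> x \<in> Vd_from d (mindeg d x + j)"
proof -
  have "\<xi> a *v x (m - a) = 0" if "m < mindeg d x + j" "a \<le> m" for m a
    using assms that less_mindeg_imp_zero[of "m - a" d x] by (cases "a < j") auto
  then show ?thesis by (auto simp: Vd_from_def act_def)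
qed

lemma act_leading_term:
  assumes "\<forall>a<j. \<xi> a = 0" "mindeg d x + j \<le> d"
  shows "act d \<xi> x (mindeg d x + j) = \<xi> j *v x (mindeg d x)"
proof -
  let ?n = "mindeg d x"
  have "\<xi> a *v x (?n + j - a) = 0" if "a \<le> ?n + j" "a \<noteq> j" for a
    using assms that less_mindeg_imp_zero[of "?n + j - a" d x] by (cases "a < j") auto
  then have "(\<Sum>a\<le>?n + j. \<xi> a *v x (?n + j - a)) = \<xi> j *v x ?n"
    by (subst sum.mono_neutral_right[of _ "{j}"]) auto
  then show ?thesis using assms(2) by (simp add: act_def)
qed

text \<open>Triangular solving: since \<open>A \<mapsto> A x\<^sub>n\<close> maps \<open>sl\<^sub>2\<close> onto \<open>T\<close>, the coefficients of
  \<open>\<xi>\<close> can be chosen degree by degree to match \<open>v\<close>, starting at \<open>z\<^bsup>j\<^esup>\<close>.\<close>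

lemma act_onto_Vd_from:
  assumes "v \<in> Vd_from d (mindeg d x + j)"
  shows "\<exists>\<xi>\<in>gd d. (\<forall>a<j. \<xi> a = 0) \<and> act d \<xi> x = v"
  using assms
proof (induction "Suc d - (mindeg d x + j)" arbitrary: j v)
  case 0
  then have "v = 0" by (auto simp: Vd_from_def fun_eq_iff)
  then show ?case by (intro bexI[of _ 0]) (auto simp: gd_def sl2_0 act_def fun_eq_iff)
next
  case (Suc t)
  let ?n = "mindeg d x"
  have nj: "?n + j \<le> d" using Suc.hyps(2) by simp
  then obtain A where A: "A \<in> sl2" "A *v x ?n = v (?n + j)"
    using sl2_apply_surj mindeg_nonzero[of d x] by fastforce
  have v': "v - act d (gmonom j A) x \<in> Vd_from d (?n + Suc j)"
  proof -
    have "v m = act d (gmonom j A) x m" if m: "m < ?n + Suc j \<or> d < m" for m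
    proof -
      consider "d < m" | "m < ?n + j" | "m = ?n + j" using m by linarith
      then show ?thesis
        using Suc.prems A nj less_mindeg_imp_zero[of "m - j" d x]
        by cases (auto simp: Vd_from_def act_gmonom)
    qed
    then show ?thesis by (simp add: Vd_from_def)
  qed
  obtain \<xi>' where \<xi>': "\<xi>' \<in> gd d" "\<forall>a<Suc j. \<xi>' a = 0" "act d \<xi>' x = v - act d (gmonom j A) x"
  proof -
    have "t = Suc d - (?n + Suc j)" using Suc.hyps(2) by simp
    then show thesis using Suc.hyps(1)[OF _ v'] that by blast
  qed
  show ?case
  proof (intro bexI conjI)
    show "gmonom j A + \<xi>' \<in> gd d" using A nj \<xi>' by (intro gd_add gmonom_gd) auto
    show "\<forall>a<j. (gmonom j A + \<xi>') a = 0" using \<xi>' by (simp add: gmonom_def)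
    show "act d (gmonom j A + \<xi>') x = v" using \<xi>' by (simp add: act_add)
  qed
qed

lemma orbit_sp_eq_Vd_from: "orbit_sp d x = Vd_from d (mindeg d x)"
proof
  show "orbit_sp d x \<subseteq> Vd_from d (mindeg d x)"
    using act_in_Vd_from[of 0 _ d x] by (auto simp: orbit_sp_def)
  show "Vd_from d (mindeg d x) \<subseteq> orbit_sp d x"
    using act_onto_Vd_from[of _ d x 0] by (force simp: orbit_sp_def)
qed

text \<open>Start from the \<open>sl\<^sub>2\<close> annihilator
  of the leading coefficient of \<open>x\<close> (of any nonzero vector if \<open>x = 0\<close>) placed in degree \<open>0\<close>,
  and cancel the higher-degree terms of its action with an element of \<open>z g\<^sub>d\<close>.\<close>

lemma stab_mindeg_0_exists: "\<exists>\<xi>\<in>stab d x. mindeg d \<xi> = 0"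
proof -
  let ?n = "mindeg d x"
  have "axis 1 1 \<noteq> (0::complex^2)" by (simp add: axis_eq_0_iff)
  then obtain v :: "complex^2" where v: "v \<noteq> 0" "?n \<le> d \<longrightarrow> v = x ?n"
    using mindeg_nonzero[of d x] by (cases "?n \<le> d") blast+
  define B where "B = sl2_annihilator v"
  have B: "B \<in> sl2" "B \<noteq> 0" "B *v v = 0"
    using v by (simp_all add: B_def sl2_annihilator_sl2 sl2_annihilator_nonzero sl2_annihilator_apply)
  have "act d (gmonom 0 B) x m = 0" if m: "m < ?n + 1 \<or> d < m" for m
  proof -
    consider "d < m" | "m < ?n" | "m = ?n" "m \<le> d" using m by linarith
    then show ?thesis
    proof cases
      case 2
      then show ?thesis using less_mindeg_imp_zero[of m d x] by (simp add: act_gmonom)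
    next
      case 3
      then show ?thesis using B v by (simp add: act_gmonom)
    qed (simp add: act_gmonom)
  qed
  then have "act d (gmonom 0 B) x \<in> Vd_from d (?n + 1)" by (simp add: Vd_from_def)
  then obtain \<xi>' where \<xi>': "\<xi>' \<in> gd d" "\<xi>' 0 = 0" "act d \<xi>' x = act d (gmonom 0 B) x"
    using act_onto_Vd_from[of _ d x 1] by (auto simp: less_Suc_eq)
  show ?thesis
  proof (intro bexI)
    show "mindeg d (gmonom 0 B - \<xi>') = 0" using \<xi>' B by (simp add: mindeg_eq_0_iff gmonom_def)
    show "gmonom 0 B - \<xi>' \<in> stab d x"
      using \<xi>' B by (simp add: stab_def gd_diff gmonom_gd act_diff fun_eq_iff)
  qed
qed

lemma stab_add: "\<xi> \<in> stab d x \<Longrightarrow> \<eta> \<in> stab d x \<Longrightarrow> \<xi> + \<eta> \<in> stab d x"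
  by (simp add: stab_def gd_add act_add fun_eq_iff)

lemma stab_diff: "\<xi> \<in> stab d x \<Longrightarrow> \<eta> \<in> stab d x \<Longrightarrow> \<xi> - \<eta> \<in> stab d x"
  by (simp add: stab_def gd_diff act_diff fun_eq_iff)

lemma sum_triangle_swap:
  fixes F :: "nat \<Rightarrow> nat \<Rightarrow> nat \<Rightarrow> 'a::comm_monoid_add"
  shows "(\<Sum>a\<le>m. \<Sum>i\<le>a. F i (a - i) (m - a)) = (\<Sum>i\<le>m. \<Sum>b\<le>m - i. F i b (m - i - b))"
proof -
  have "(\<Sum>i\<le>m. \<Sum>b\<le>m - i. F i b (m - i - b)) = (\<Sum>(i, b)\<in>{(i, b). i + b \<le> m}. F i b (m - i - b))"
    by (subst sum.Sigma) (auto intro: sum.cong)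
  also have "\<dots> = (\<Sum>a\<le>m. \<Sum>i\<le>a. F i (a - i) (m - i - (a - i)))"
    by (rule sum.triangle_reindex_eq)
  also have "\<dots> = (\<Sum>a\<le>m. \<Sum>i\<le>a. F i (a - i) (m - a))"
    by (intro sum.cong refl) auto
  finally show ?thesis by simp
qed

lemma sum_matrix_vector_mult: "(\<Sum>i\<in>I. f i) *v v = (\<Sum>i\<in>I. f i *v v)"
  by (induction I rule: infinite_finite_induct) (auto simp: matrix_vector_mult_add_rdistrib)

lemma mscale_0 [simp]: "mscale 0 M = 0"
  by (simp add: mscale_def vec_eq_iff)

lemma mscale_mult_vec: "mscale c M *v v = c *s (M *v v)"
  by (simp add: mscale_def mat2_mult_vec vec2_eq_iff algebra_simps)

lemma pmul_eq: "pmul d c \<xi> = (\<lambda>m. if m \<le> d then \<Sum>i\<le>m. mscale (c i) (\<xi> (m - i)) else 0)"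
  unfolding pmul_def mscale_def ..

lemma pmul_gd: "\<xi> \<in> gd d \<Longrightarrow> pmul d c \<xi> \<in> gd d"
  by (auto simp: pmul_eq gd_def intro!: sl2_sum sl2_mscale sl2_0)

lemma pmul_add: "pmul d (\<lambda>i. c i + c' i) \<xi> = pmul d c \<xi> + pmul d c' \<xi>"
  by (simp add: pmul_def fun_eq_iff vec_eq_iff sum.distrib distrib_right)

lemma pmul_diff: "pmul d (\<lambda>i. c i - c' i) \<xi> = pmul d c \<xi> - pmul d c' \<xi>"
  by (simp add: pmul_def fun_eq_iff vec_eq_iff sum_subtractf left_diff_distrib)

lemma pmul_monom:
  "pmul d (\<lambda>i. if i = k then l else 0) \<xi> m = (if k \<le> m \<and> m \<le> d then mscale l (\<xi> (m - k)) else 0)"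
proof -
  have "mscale (if i = k then l else 0) M = (if i = k then mscale l M else 0)" for i M
    by (simp add: mscale_def vec_eq_iff)
  then show ?thesis by (simp add: pmul_eq)
qed

lemma act_pmul:
  assumes "m \<le> d"
  shows "act d (pmul d c \<xi>) x m = (\<Sum>i\<le>m. c i *s act d \<xi> x (m - i))"
proof -
  have "act d (pmul d c \<xi>) x m = (\<Sum>a\<le>m. \<Sum>i\<le>a. c i *s (\<xi> (a - i) *v x (m - a)))"
    using assms by (auto simp: act_def pmul_eq sum_matrix_vector_mult mscale_mult_vec intro!: sum.cong)
  also have "\<dots> = (\<Sum>i\<le>m. \<Sum>b\<le>m - i. c i *s (\<xi> b *v x (m - i - b)))"
    by (rule sum_triangle_swap[where F = "\<lambda>i b e. c i *s (\<xi> b *v x e)"])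
  also have "\<dots> = (\<Sum>i\<le>m. c i *s act d \<xi> x (m - i))"
    using assms by (auto simp: act_def sum_cmul intro!: sum.cong)
  finally show ?thesis .
qed

lemma pmul_stab:
  assumes "\<xi> \<in> stab d x"
  shows "pmul d c \<xi> \<in> stab d x"
proof -
  have "act d \<xi> x = (\<lambda>m. 0)" using assms by (simp add: stab_def)
  then have "act d (pmul d c \<xi>) x m = 0" for m
    by (cases "m \<le> d") (simp_all add: act_pmul, simp add: act_def)
  then show ?thesis using assms by (simp add: stab_def pmul_gd fun_eq_iff)
qed

text \<open>Each new coefficient of \<open>\<eta> - c \<xi>\<close> kills the leading coefficient of \<open>x\<close>, so by the
  one-dimensionality of the annihilator in \<open>sl\<^sub>2\<close> it is a multiple of \<open>\<xi> 0\<close>.\<close>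

lemma stab_eq_pmul_below:
  assumes \<xi>: "\<xi> \<in> stab d x" "\<xi> 0 \<noteq> 0" and \<eta>: "\<eta> \<in> stab d x"
  shows "j + mindeg d x \<le> Suc d \<Longrightarrow> \<exists>c. (\<forall>i\<ge>j. c i = 0) \<and> (\<forall>m<j. \<eta> m = pmul d c \<xi> m)"
proof (induction j)
  case 0
  show ?case by (intro exI[of _ "\<lambda>i. 0"]) simp
next
  case (Suc j)
  let ?n = "mindeg d x"
  obtain c where c: "\<forall>i\<ge>j. c i = 0" "\<forall>m<j. \<eta> m = pmul d c \<xi> m"
    using Suc by auto
  have jn: "?n + j \<le> d" using Suc.prems by simp
  define \<eta>' where "\<eta>' = \<eta> - pmul d c \<xi>"
  have \<eta>': "\<eta>' \<in> stab d x" "\<forall>a<j. \<eta>' a = 0"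
    using c \<xi> \<eta> by (auto simp: \<eta>'_def intro: stab_diff pmul_stab)
  have "\<eta>' j *v x ?n = 0" "\<xi> 0 *v x ?n = 0"
    using act_leading_term[of j \<eta>' d x] act_leading_term[of 0 \<xi> d x] \<eta>' \<xi> jn
    by (simp_all add: stab_def)
  moreover have "\<eta>' j \<in> sl2" "\<xi> 0 \<in> sl2" "x ?n \<noteq> 0"
    using \<eta>' \<xi> jn mindeg_nonzero[of d x] by (auto simp: stab_def gd_def)
  ultimately obtain l where l: "\<eta>' j = mscale l (\<xi> 0)"
    using sl2_annihilator_proportional \<xi>(2) by blast
  define c' where "c' = (\<lambda>i. c i + (if i = j then l else 0))"
  have "pmul d c' \<xi> m = pmul d c \<xi> m + (if j \<le> m \<and> m \<le> d then mscale l (\<xi> (m - j)) else 0)" for m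
    by (simp add: c'_def pmul_add pmul_monom)
  moreover have "\<eta> j = pmul d c \<xi> j + mscale l (\<xi> 0)"
    using l by (simp add: \<eta>'_def algebra_simps)
  ultimately have "\<forall>m<Suc j. \<eta> m = pmul d c' \<xi> m"
    using c jn by (auto simp: less_Suc_eq)
  moreover have "\<forall>i\<ge>Suc j. c' i = 0" using c by (simp add: c'_def)
  ultimately show ?case by blast
qed

definition gd_tail :: "nat \<Rightarrow> nat \<Rightarrow> gel set" where
  "gd_tail d n = {\<zeta>. (\<forall>j. \<zeta> j \<in> sl2) \<and> (\<forall>j. (j + n \<le> d \<or> j > d) \<longrightarrow> \<zeta> j = 0)}"

lemma gd_tail_subset_stab: "gd_tail d (mindeg d x) \<subseteq> stab d x"
proof
  fix \<zeta> assume \<zeta>: "\<zeta> \<in> gd_tail d (mindeg d x)"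
  have "\<zeta> a *v x (m - a) = 0" if "m \<le> d" "a \<le> m" for m a
    using \<zeta> that less_mindeg_imp_zero[of "m - a" d x]
    by (cases "a + mindeg d x \<le> d") (auto simp: gd_tail_def)
  then show "\<zeta> \<in> stab d x" using \<zeta> by (simp add: stab_def gd_def gd_tail_def act_def fun_eq_iff)
qed

lemma zmul_image_gd: "n \<le> Suc d \<Longrightarrow> zmul d (d + 1 - n) ` gd d = gd_tail d n"
proof
  show "zmul d (d + 1 - n) ` gd d \<subseteq> gd_tail d n"
    by (auto simp: zmul_def gd_def gd_tail_def sl2_0)
  assume n: "n \<le> Suc d"
  show "gd_tail d n \<subseteq> zmul d (d + 1 - n) ` gd d"
  proof
    fix \<zeta> assume \<zeta>: "\<zeta> \<in> gd_tail d n"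
    have "\<zeta> = zmul d (d + 1 - n) (\<lambda>m. \<zeta> (m + (d + 1 - n)))"
      using \<zeta> n by (auto simp: zmul_def gd_tail_def fun_eq_iff)
    moreover have "(\<lambda>m. \<zeta> (m + (d + 1 - n))) \<in> gd d"
      using \<zeta> by (auto simp: gd_def gd_tail_def)
    ultimately show "\<zeta> \<in> zmul d (d + 1 - n) ` gd d" by blast
  qed
qed

lemma stab_decomposition:
  assumes "\<xi> \<in> stab d x" "\<xi> 0 \<noteq> 0" "\<eta> \<in> stab d x"
  shows "\<exists>c \<zeta>. (\<forall>i. d < mindeg d x + i \<longrightarrow> c i = 0) \<and> \<zeta> \<in> gd_tail d (mindeg d x)
            \<and> \<eta> = (\<lambda>m. pmul d c \<xi> m + \<zeta> m)"
proof -
  let ?n = "mindeg d x"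
  obtain c where c: "\<forall>i\<ge>Suc d - ?n. c i = 0" "\<forall>m<Suc d - ?n. \<eta> m = pmul d c \<xi> m"
    using stab_eq_pmul_below[OF assms, of "Suc d - ?n"] mindeg_le_Suc[of d x] by auto
  define \<zeta> where "\<zeta> = \<eta> - pmul d c \<xi>"
  have "\<zeta> \<in> gd d" using assms by (simp add: \<zeta>_def stab_def gd_diff pmul_gd)
  then have "\<zeta> \<in> gd_tail d ?n" using c by (auto simp: gd_def gd_tail_def \<zeta>_def)
  moreover have "\<forall>i. d < ?n + i \<longrightarrow> c i = 0" using c by simp
  ultimately show ?thesis by (intro exI[of _ c] exI[of _ \<zeta>]) (auto simp: \<zeta>_def)
qed

lemma pmul_eq_0_imp_coeffs_eq_0:
  assumes "\<xi> 0 \<noteq> 0" "K \<le> d" "\<forall>m\<le>K. pmul d c \<xi> m = 0"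
  shows "i \<le> K \<Longrightarrow> c i = 0"
proof (induction i rule: less_induct)
  case (less i)
  have "(\<Sum>j<i. mscale (c j) (\<xi> (i - j))) = 0"
    using less by (intro sum.neutral) auto
  then have "mscale (c i) (\<xi> 0) = pmul d c \<xi> i"
    using less.prems assms(2) by (simp add: pmul_eq lessThan_Suc_atMost[symmetric])
  also have "\<dots> = 0" using less.prems assms(3) by simp
  finally show ?case using assms(1) by (auto simp: mscale_def vec_eq_iff)
qed

lemma pmul_plus_tail_unique:
  assumes "\<xi> 0 \<noteq> 0" "n \<le> Suc d"
    and "\<forall>i. d < n + i \<longrightarrow> c i = 0" "\<zeta> \<in> gd_tail d n"
    and "\<forall>i. d < n + i \<longrightarrow> c' i = 0" "\<zeta>' \<in> gd_tail d n"
    and eq: "(\<lambda>m. pmul d c \<xi> m + \<zeta> m) = (\<lambda>m. pmul d c' \<xi> m + \<zeta>' m)"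
  shows "c = c' \<and> \<zeta> = \<zeta>'"
proof -
  have "pmul d (\<lambda>i. c i - c' i) \<xi> m = 0" if "m + n \<le> d" for m
    using fun_cong[OF eq, of m] assms(4,6) that by (simp add: pmul_diff gd_tail_def)
  then have "c i - c' i = 0" if "i + n \<le> d" for i
    using pmul_eq_0_imp_coeffs_eq_0[of \<xi> "d - n" d "\<lambda>i. c i - c' i" i] assms(1) that by auto
  then have "c = c'" using assms(3,5) by (metis eq_iff_diff_eq_0 not_le add.commute ext)
  moreover have "\<zeta> = \<zeta>'"
  proof
    fix m show "\<zeta> m = \<zeta>' m" using fun_cong[OF eq, of m] \<open>c = c'\<close> by simp
  qed
  ultimately show ?thesis ..
qed

lemma pmul_plus_tail_stab:
  assumes "\<xi> \<in> stab d x" "\<zeta> \<in> gd_tail d (mindeg d x)"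
  shows "(\<lambda>m. pmul d c \<xi> m + \<zeta> m) \<in> stab d x"
  using stab_add[OF pmul_stab[OF assms(1)] subsetD[OF gd_tail_subset_stab assms(2)]]
  by (simp add: plus_fun_def)

lemma stab_eq_pmul_plus_zmul:
  assumes "\<xi> \<in> stab d x" "mindeg d \<xi> = 0"
  shows "stab d x = {\<eta>. \<exists>c. \<exists>\<zeta>\<in>gd d. \<eta> = (\<lambda>m. pmul d c \<xi> m + zmul d (d + 1 - mindeg d x) \<zeta> m)}"
proof -
  have "\<xi> 0 \<noteq> 0" using assms(2) by (simp add: mindeg_eq_0_iff)
  then have "stab d x = {\<eta>. \<exists>c. \<exists>\<zeta>\<in>gd_tail d (mindeg d x). \<eta> = (\<lambda>m. pmul d c \<xi> m + \<zeta> m)}"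
    using stab_decomposition[OF assms(1)] pmul_plus_tail_stab[OF assms(1)] by blast
  then show ?thesis
    using zmul_image_gd[OF mindeg_le_Suc, of d x, symmetric] by simp
qed

lemma stab_unique_decomposition:
  assumes "\<xi> \<in> stab d x" "mindeg d \<xi> = 0"
  shows "\<eta> \<in> stab d x \<longleftrightarrow> (\<exists>!(c, \<zeta>). (\<forall>i. d < mindeg d x + i \<longrightarrow> c i = 0)
            \<and> \<zeta> \<in> gd_tail d (mindeg d x) \<and> \<eta> = (\<lambda>m. pmul d c \<xi> m + \<zeta> m))"
    (is "_ \<longleftrightarrow> (\<exists>!(c, \<zeta>). ?P c \<zeta>)")
proof
  assume "\<eta> \<in> stab d x"
  moreover have \<xi>0: "\<xi> 0 \<noteq> 0" using assms(2) by (simp add: mindeg_eq_0_iff)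
  ultimately obtain c \<zeta> where "?P c \<zeta>"
    using stab_decomposition[OF assms(1)] by blast
  moreover have "(c', \<zeta>') = (c, \<zeta>)" if "?P c' \<zeta>'" for c' \<zeta>'
    using pmul_plus_tail_unique[of \<xi> "mindeg d x" d c' \<zeta>' c \<zeta>] \<xi>0 mindeg_le_Suc[of d x]
      that \<open>?P c \<zeta>\<close> by simp
  ultimately show "\<exists>!(c, \<zeta>). ?P c \<zeta>" by (intro ex1I[of _ "(c, \<zeta>)"]) auto
qed (use pmul_plus_tail_stab[OF assms(1)] in auto)

lemma sum_fun_apply: "(\<Sum>a\<in>A. f a) x = (\<Sum>a\<in>A. f a x)"
  by (induction A rule: infinite_finite_induct) auto

interpretation V: vector_space vscale
  by unfold_locales (auto simp: vscale_def fun_eq_iff vec_eq_iff algebra_simps)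

definition unit_vel :: "nat \<Rightarrow> 2 \<Rightarrow> vel" where
  "unit_vel m q = (\<lambda>k. if k = m then axis q 1 else 0)"

definition unit_vels :: "nat \<Rightarrow> nat \<Rightarrow> vel set" where
  "unit_vels d n = (\<lambda>(m, q). unit_vel m q) ` ({n..d} \<times> UNIV)"

lemma unit_vel_component: "unit_vel m q k $ p = (if (m, q) = (k, p) then 1 else 0)"
  by (auto simp: unit_vel_def axis_def)

lemma inj_unit_vel: "inj (\<lambda>(m, q). unit_vel m q)"
proof (rule injI, clarify)
  fix m q m' q' assume "unit_vel m q = unit_vel m' q'"
  then have "unit_vel m q m $ q = unit_vel m' q' m $ q" by simp
  then show "m = m' \<and> q = q'" by (auto simp: unit_vel_component split: if_splits)
qed

lemma card_unit_vels: "card (unit_vels d n) = 2 * (Suc d - n)"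
  by (simp add: unit_vels_def card_image inj_on_subset[OF inj_unit_vel] card_cartesian_product)

lemma sum_vscale_unit_vel_component:
  "(\<Sum>(m, q)\<in>A. vscale (f m q) (unit_vel m q)) k $ p = (if (k, p) \<in> A then f k p else 0)"
    if "finite A"
proof -
  have "(\<Sum>(m, q)\<in>A. vscale (f m q) (unit_vel m q)) k $ p
      = (\<Sum>z\<in>A. if z = (k, p) then case_prod f z else 0)"
    by (auto simp: vscale_def unit_vel_component sum_fun_apply sum_component case_prod_beta
        intro!: sum.cong)
  then show ?thesis using that by simp
qed

lemma unit_vels_independent: "V.independent (unit_vels d n)"
proof (rule V.independent_if_scalars_zero)
  show "finite (unit_vels d n)" by (simp add: unit_vels_def)
  fix f v assume sum0: "(\<Sum>v\<in>unit_vels d n. vscale (f v) v) = 0" and v: "v \<in> unit_vels d n"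
  then obtain m q where mq: "m \<in> {n..d}" "v = unit_vel m q" by (auto simp: unit_vels_def)
  have "(\<Sum>v\<in>unit_vels d n. vscale (f v) v)
      = (\<Sum>(m, q)\<in>{n..d} \<times> UNIV. vscale (f (unit_vel m q)) (unit_vel m q))"
    unfolding unit_vels_def
    by (subst sum.reindex) (auto intro: inj_on_subset[OF inj_unit_vel] simp: case_prod_beta)
  then have "(\<Sum>(m, q)\<in>{n..d} \<times> UNIV. vscale (f (unit_vel m q)) (unit_vel m q)) = 0"
    using sum0 by simp
  then show "f v = 0"
    using sum_vscale_unit_vel_component[of "{n..d} \<times> UNIV" "\<lambda>m q. f (unit_vel m q)" m q] mq
    by simp
qed

lemma Vd_from_span_unit_vels: "Vd_from d n \<subseteq> V.span (unit_vels d n)"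
proof
  fix v assume v: "v \<in> Vd_from d n"
  have "v = (\<Sum>(m, q)\<in>{n..d} \<times> UNIV. vscale (v m $ q) (unit_vel m q))"
    using v by (auto simp: fun_eq_iff vec_eq_iff sum_vscale_unit_vel_component Vd_from_def)
  also have "\<dots> \<in> V.span (unit_vels d n)"
    by (intro V.span_sum) (auto simp: unit_vels_def intro: V.span_scale V.span_base)
  finally show "v \<in> V.span (unit_vels d n)" .
qed

lemma cdim_Vd_from: "cdim (Vd_from d n) = 2 * (Suc d - n)"
  unfolding cdim_def
proof (rule V.dim_unique[OF _ Vd_from_span_unit_vels unit_vels_independent card_unit_vels])
  show "unit_vels d n \<subseteq> Vd_from d n" by (auto simp: unit_vels_def unit_vel_def Vd_from_def)
qed

lemma Vs_eq: "Vs d s = {x \<in> Vd d. s = 2 * (Suc d - mindeg d x)}"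
  by (auto simp: Vs_def orbit_sp_eq_Vd_from cdim_Vd_from)

interpretation Seq: vector_space "\<lambda>(c::complex) (f::nat \<Rightarrow> complex) i. c * f i"
  by unfold_locales (auto simp: fun_eq_iff algebra_simps)

definition unit_seq :: "nat \<Rightarrow> nat \<Rightarrow> complex" where
  "unit_seq i = (\<lambda>l. if l = i then 1 else 0)"

lemma inj_unit_seq: "inj unit_seq"
  by (rule injI) (metis unit_seq_def zero_neq_one)

lemma unit_seqs_independent: "Seq.independent (unit_seq ` {..<k})"
proof (rule Seq.independent_if_scalars_zero)
  show "finite (unit_seq ` {..<k})" by simp
  fix f u assume sum0: "(\<Sum>u\<in>unit_seq ` {..<k}. (\<lambda>i. f u * u i)) = 0" and u: "u \<in> unit_seq ` {..<k}"
  then obtain l where l: "l < k" "u = unit_seq l" by auto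
  have "0 = (\<Sum>v\<in>unit_seq ` {..<k}. f v * v l)"
    using fun_cong[OF sum0, of l] by (simp add: sum_fun_apply)
  also have "\<dots> = (\<Sum>v\<in>unit_seq ` {..<k}. if v = u then f v else 0)"
  proof (intro sum.cong refl, clarify)
    fix i assume "i < k"
    show "f (unit_seq i) * unit_seq i l = (if unit_seq i = u then f (unit_seq i) else 0)"
      using l by (cases "i = l") (auto simp: inj_eq[OF inj_unit_seq], auto simp: unit_seq_def)
  qed
  also have "\<dots> = f u" using u by simp
  finally show "f u = 0" by simp
qed

lemma linear_lin_funs:
  "Vector_Spaces.linear vscale (\<lambda>c f i. c * f i) (\<lambda>x i. if i < k then lin_fun d a i x else 0)"
  unfolding Vector_Spaces.linear_iff
  by (auto simp: V.vector_space_axioms Seq.vector_space_axioms lin_fun_def vscale_def fun_eq_iff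
      algebra_simps sum.distrib sum_distrib_left)

text \<open>If \<open>k\<close> linear functionals map \<open>S \<subseteq> z\<^sup>n V\<^sub>d\<close> onto a set containing a polydisc, the
  differences of its points span \<open>\<complex>\<^sup>k\<close>, which is the image of a space of dimension
  \<open>2 (d + 1 - n)\<close>.\<close>

lemma ball_in_lin_image_le:
  assumes S: "S \<subseteq> Vd_from d n" and r: "r > 0"
    and ball: "\<forall>w. (\<forall>i<k. cmod (w i - c i) < r) \<longrightarrow> (\<exists>x\<in>S. \<forall>i<k. lin_fun d a i x = w i)"
  shows "k \<le> 2 * (Suc d - n)"
proof -
  define L where "L x = (\<lambda>i. if i < k then lin_fun d a i x else 0)" for x
  interpret L: Vector_Spaces.linear vscale "\<lambda>c f i. c * f i" L
    unfolding L_def by (rule linear_lin_funs)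
  have "unit_seq l \<in> Seq.span (L ` S)" if l: "l < k" for l
  proof -
    obtain x1 where x1: "x1 \<in> S" "\<forall>i<k. lin_fun d a i x1 = c i" using ball r by force
    have "cmod (c i + of_real (r/2) * unit_seq l i - c i) < r" for i
      using r by (simp add: unit_seq_def norm_mult)
    then obtain x2 where x2: "x2 \<in> S" "\<forall>i<k. lin_fun d a i x2 = c i + of_real (r/2) * unit_seq l i"
      using ball[rule_format, of "\<lambda>i. c i + of_real (r/2) * unit_seq l i"] by blast
    have "unit_seq l = (\<lambda>i. of_real (2/r) * (L x2 - L x1) i)"
    proof
      fix i
      have "(L x2 - L x1) i = (if i < k then of_real (r/2) * unit_seq l i else 0)"
        using x1 x2 by (simp add: L_def)
      then show "unit_seq l i = of_real (2/r) * (L x2 - L x1) i"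
        using r l by (auto simp: unit_seq_def)
    qed
    also have "\<dots> \<in> Seq.span (L ` S)"
      using x1 x2 by (intro Seq.span_scale Seq.span_diff Seq.span_base) auto
    finally show ?thesis .
  qed
  moreover have "Seq.span (L ` S) \<subseteq> Seq.span (L ` unit_vels d n)"
  proof (rule Seq.span_minimal[OF _ Seq.subspace_span])
    have "L ` S \<subseteq> L ` V.span (unit_vels d n)"
      using S Vd_from_span_unit_vels[of d n] by (intro image_mono) simp
    then show "L ` S \<subseteq> Seq.span (L ` unit_vels d n)" by (simp add: L.span_image)
  qed
  ultimately have "unit_seq ` {..<k} \<subseteq> Seq.span (L ` unit_vels d n)" by blast
  then have "card (unit_seq ` {..<k}) \<le> card (L ` unit_vels d n)"
    using Seq.independent_span_bound unit_seqs_independent by (simp add: unit_vels_def)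
  also have "\<dots> \<le> card (unit_vels d n)" by (rule card_image_le) (simp add: unit_vels_def)
  finally show ?thesis using inj_unit_seq by (simp add: card_image inj_on_subset card_unit_vels)
qed

lemma lin_fun_coordinate:
  "lin_fun d (\<lambda>i m j. if m = f i \<and> j = g i then 1 else 0) i x = (if f i \<le> d then x (f i) $ g i else 0)"
proof -
  have "(\<Sum>j\<in>UNIV. (if m = f i \<and> j = g i then 1 else 0) * x m $ j)
      = (\<Sum>j\<in>UNIV. if j = g i then (if m = f i then x m $ j else 0) else 0)" for m
    by (intro sum.cong) auto
  then show ?thesis by (simp add: lin_fun_def)
qed

text \<open>Coordinates of \<open>Tz\<^sup>n \<oplus> \<dots> \<oplus> Tz\<^sup>d\<close> map the points of minimal degree \<open>n\<close> onto the
  polydisc of radius \<open>1\<close> around \<open>(1, \<dots>, 1)\<close>, on which the coefficient of \<open>z\<^sup>n\<close> cannot vanish.\<close>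

lemma mindeg_set_lin_image_ball:
  assumes "n \<le> Suc d"
  shows "\<exists>a c r. r > 0 \<and> (\<forall>w. (\<forall>i<2 * (Suc d - n). cmod (w i - c i) < r) \<longrightarrow>
           (\<exists>x\<in>{x \<in> Vd d. mindeg d x = n}. \<forall>i<2 * (Suc d - n). lin_fun d a i x = w i))"
proof (intro exI conjI allI impI)
  let ?k = "2 * (Suc d - n)"
  let ?g = "\<lambda>i. if even i then 1 else 2 :: 2"
  fix w :: "nat \<Rightarrow> complex" assume w: "\<forall>i<?k. cmod (w i - 1) < 1"
  define x :: vel where
    "x m = (if n \<le> m \<and> m \<le> d then vector [w (2 * (m - n)), w (2 * (m - n) + 1)] else 0)" for m
  have "n \<le> d \<Longrightarrow> w 0 \<noteq> 0" using w by force
  then have "mindeg d x = n" using assms by (intro mindeg_eqI) (auto simp: x_def vec2_eq_iff)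
  then show "\<exists>x\<in>{x \<in> Vd d. mindeg d x = n}.
      \<forall>i<?k. lin_fun d (\<lambda>i m j. if m = n + i div 2 \<and> j = ?g i then 1 else 0) i x = w i"
  proof (intro bexI ballI allI impI)
    fix i assume "i < ?k"
    then have "n + i div 2 \<le> d" by simp
    moreover have "2 * (i div 2) + (if even i then 0 else 1) = i" by simp
    ultimately show "lin_fun d (\<lambda>i m j. if m = n + i div 2 \<and> j = ?g i then 1 else 0) i x = w i"
      by (cases "even i") (simp_all add: lin_fun_coordinate x_def)
  qed (simp add: Vd_def x_def)
qed simp

lemma setdim_mindeg_set:
  assumes "n \<le> Suc d"
  shows "setdim d {x \<in> Vd d. mindeg d x = n} = 2 * (Suc d - n)"
  unfolding setdim_def
proof (rule cSup_eq_maximum)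
  show "2 * (Suc d - n) \<in> {k. \<exists>a c r. r > 0 \<and> (\<forall>w. (\<forall>i<k. cmod (w i - c i) < r) \<longrightarrow>
          (\<exists>x\<in>{x \<in> Vd d. mindeg d x = n}. \<forall>i<k. lin_fun d a i x = w i))}"
    using mindeg_set_lin_image_ball[OF assms] by simp
  have "{x \<in> Vd d. mindeg d x = n} \<subseteq> Vd_from d n"
    by (auto simp: Vd_def Vd_from_def less_mindeg_imp_zero)
  then show "k \<le> 2 * (Suc d - n)" if "k \<in> {k. \<exists>a c r. r > 0 \<and> (\<forall>w. (\<forall>i<k. cmod (w i - c i) < r) \<longrightarrow>
          (\<exists>x\<in>{x \<in> Vd d. mindeg d x = n}. \<forall>i<k. lin_fun d a i x = w i))}" for k
    using that ball_in_lin_image_le by blast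
qed

lemma Vs_eq_mindeg_set:
  assumes "n \<le> d + 1"
  shows "Vs d (2 * (d + 1 - n)) = {x \<in> Vd d. mindeg d x = n}"
proof -
  have "2 * (d + 1 - n) = 2 * (Suc d - mindeg d x) \<longleftrightarrow> mindeg d x = n" for x
    using assms mindeg_le_Suc[of d x] by auto
  then show ?thesis by (auto simp: Vs_eq)
qed

lemma mindeg_set_eq:
  assumes "n \<le> d + 1"
  shows "{x \<in> Vd d. mindeg d x = n} = {x. (\<forall>m<n. x m = 0) \<and> (n \<le> d \<longrightarrow> x n \<noteq> 0) \<and> (\<forall>m>d. x m = 0)}"
  using assms mindeg_eqI[of n d] less_mindeg_imp_zero[of _ d] mindeg_nonzero[of d]
  by (auto simp: Vd_def)

lemma Vs_empty:
  assumes "\<forall>n\<le>d + 1. s \<noteq> 2 * (d + 1 - n)"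
  shows "Vs d s = {}"
  using assms mindeg_le_Suc[of d] by (auto simp: Vs_eq)

lemma setdim_Vs:
  assumes "Vs d s \<noteq> {}"
  shows "setdim d (Vs d s) = s"
proof -
  obtain x where "x \<in> Vs d s" using assms by blast
  then have s: "s = 2 * (d + 1 - mindeg d x)" by (simp add: Vs_eq)
  have "mindeg d x \<le> d + 1" using mindeg_le_Suc by simp
  then show ?thesis using s Vs_eq_mindeg_set setdim_mindeg_set by simp
qed

lemma modality_eq_0: "modality d = 0"
proof -
  define x :: vel where "x = (\<lambda>m. if m = 0 then axis 1 1 else 0)"
  have "mindeg d x = 0" by (simp add: x_def mindeg_eq_0_iff axis_eq_0_iff)
  then have "x \<in> Vs d (2 * (d + 1 - 0))"
    using Vs_eq_mindeg_set[of 0 d] by (simp add: Vd_def x_def)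
  then have "(\<lambda>s. int (setdim d (Vs d s)) - int s) ` {s. Vs d s \<noteq> {}} = {0}"
    using setdim_Vs by auto
  then show ?thesis by (simp add: modality_def)
qed

theorem proposition3p3:
  fixes d :: nat and x :: vel
  assumes "x \<in> Vd d"
  defines "n \<equiv> mindeg d x"
  shows "(\<exists>\<xi>\<in>stab d x. mindeg d \<xi> = 0)
    \<and> (\<forall>\<xi>\<in>stab d x. mindeg d \<xi> = 0 \<longrightarrow>
          stab d x = {\<eta>. \<exists>c. \<exists>\<zeta>\<in>gd d. \<eta> = (\<lambda>m. pmul d c \<xi> m + zmul d (d + 1 - n) \<zeta> m)}
        \<and> (\<forall>\<eta>. \<eta> \<in> stab d x \<longleftrightarrow>
              (\<exists>!(c, \<zeta>). (\<forall>i. n + i > d \<longrightarrow> c i = 0)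
                  \<and> (\<forall>j. \<zeta> j \<in> sl2) \<and> (\<forall>j. (j + n \<le> d \<or> j > d) \<longrightarrow> \<zeta> j = 0)
                  \<and> \<eta> = (\<lambda>m. pmul d c \<xi> m + \<zeta> m))))
    \<and> (\<forall>n'\<le>d + 1.
          Vs d (2 * (d + 1 - n')) = {x' \<in> Vd d. mindeg d x' = n'}
        \<and> Vs d (2 * (d + 1 - n')) =
            {x'. (\<forall>m<n'. x' m = 0) \<and> (n' \<le> d \<longrightarrow> x' n' \<noteq> 0) \<and> (\<forall>m>d. x' m = 0)})
    \<and> (\<forall>s. (\<forall>n'\<le>d + 1. s \<noteq> 2 * (d + 1 - n')) \<longrightarrow> Vs d s = {})
    \<and> modality d = 0
    \<and> (\<forall>s. Vs d s \<noteq> {} \<longrightarrow> int (setdim d (Vs d s)) - int s = 0)"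
  using stab_mindeg_0_exists stab_eq_pmul_plus_zmul
    stab_unique_decomposition[unfolded gd_tail_def mem_Collect_eq conj_assoc]
    Vs_eq_mindeg_set mindeg_set_eq Vs_empty modality_eq_0 setdim_Vs
  unfolding n_def by simp

end
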